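(* Let $\widetilde X$ be a pure $d$-multicomplex. The following are equivalent: (1) $\widetilde X$ is link-connected; (2) for every $-1\le j\le d-2$ and every $j$-multicell $\mathfrak a$ of $\widetilde X$ (for $j=-1$, $\mathfrak a$ is the empty multicell), any two $d$-multicells containing $\mathfrak a$ can be joined by a finite sequence of $d$-multicells, each containing $\mathfrak a$, such that any two consecutive ones contain a common $(d-1)$-multicell which itself contains $\mathfrak a$ (i.e. the link of $\mathfrak a$ is $(d-j-1)$-lower path connected).
   Context: A $d$-multicomplex is a triple $\widetilde X=(X,\mathsf m,\mathsf g)$: $X$ is a $d$-dimensional simplicial complex on a countable vertex set; $\mathsf m:X\to\mathbb N$ is a multiplicity function equal to $1$ on the empty cell and on vertices; the multicells are the pairs $(\tau,r)$ with $\tau\in X$, $1\le r\le \mathsf m(\tau)$, of dimension $\dim\tau$; and $\mathsf g$ assigns to every multicell $(\tau,r)$ and every codimension-one face $\sigma$ of $\tau$ a multicell $\mathsf g((\tau,r),\sigma)=(\sigma,s)$ (the copy of $\sigma$ glued to the boundary of $(\tau,r)$). Containment $\preceq$ is the reflexive–transitive closure of the relation "$\mathfrak b=\mathsf g(\mathfrak a,\sigma)$ for some $\sigma$". Consistency is required: if $\mathfrak b=(\sigma,s)$, $\mathfrak b'=(\sigma',s')$ are multicells of equal dimension contained in a common multicell and $\rho=\sigma\cap\sigma'$ has codimension one in both, then $\mathsf g(\mathfrak b,\rho)=\mathsf g(\mathfrak b',\rho)$. $\widetilde X$ is pure if every multicell is contained in some $d$-multicell. For a multicell $\mathfrak a$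 of dimension $j\le d-2$, the $1$-skeleton of its link is the multigraph whose vertices are the $(j+1)$-multicells containing $\mathfrak a$ and whose edges are the $(j+2)$-multicells containing $\mathfrak a$, each joining the two $(j+1)$-multicells containing $\mathfrak a$ that it contains. $\widetilde X$ is link-connected if for every multicell $\mathfrak a$ of dimension at most $d-2$ (including the empty multicell) this multigraph is connected. *)

theory Defs
  imports Main "HOL-Library.Countable_Set"
begin

text \<open>Cells are finite vertex sets; a cell \<tau> has dimension card \<tau> - 1.
  A multicell is a pair (\<tau>, r) with \<tau> in X and 1 \<le> r \<le> m \<tau>.\<close>

type_synonym 'v mcell = "'v set \<times> nat"

definition is_multicell :: "'v set set \<Rightarrow> ('v set \<Rightarrow> nat) \<Rightarrow> 'v mcell \<Rightarrow> bool" where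
  "is_multicell X m a \<longleftrightarrow> fst a \<in> X \<and> 1 \<le> snd a \<and> snd a \<le> m (fst a)"

definition codim1_face :: "'v set \<Rightarrow> 'v set \<Rightarrow> bool" where
  "codim1_face \<sigma> \<tau> \<longleftrightarrow> \<sigma> \<subseteq> \<tau> \<and> card \<sigma> + 1 = card \<tau>"

definition glue_step :: "'v set set \<Rightarrow> ('v set \<Rightarrow> nat) \<Rightarrow> ('v mcell \<Rightarrow> 'v set \<Rightarrow> 'v mcell)
    \<Rightarrow> 'v mcell \<Rightarrow> 'v mcell \<Rightarrow> bool" where
  "glue_step X m g a b \<longleftrightarrow> is_multicell X m a \<and> (\<exists>\<sigma>. codim1_face \<sigma> (fst a) \<and> b = g a \<sigma>)"

text \<open>contained X m g b a: the multicell b is contained in a (b \<preceq> a), the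
  reflexive-transitive closure of the gluing relation.\<close>
definition contained :: "'v set set \<Rightarrow> ('v set \<Rightarrow> nat) \<Rightarrow> ('v mcell \<Rightarrow> 'v set \<Rightarrow> 'v mcell)
    \<Rightarrow> 'v mcell \<Rightarrow> 'v mcell \<Rightarrow> bool" where
  "contained X m g b a \<longleftrightarrow> (glue_step X m g)\<^sup>*\<^sup>* a b"

definition simplicial_complex :: "nat \<Rightarrow> 'v set set \<Rightarrow> bool" where
  "simplicial_complex d X \<longleftrightarrow>
     countable (\<Union>X) \<and>
     {} \<in> X \<and>
     (\<forall>\<tau>\<in>X. finite \<tau> \<and> card \<tau> \<le> d + 1) \<and>
     (\<forall>\<tau>\<in>X. \<forall>\<sigma>. \<sigma> \<subseteq> \<tau> \<longrightarrow> \<sigma> \<in> X) \<and>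
     (\<exists>\<tau>\<in>X. card \<tau> = d + 1)"

definition multicomplex :: "nat \<Rightarrow> 'v set set \<Rightarrow> ('v set \<Rightarrow> nat)
    \<Rightarrow> ('v mcell \<Rightarrow> 'v set \<Rightarrow> 'v mcell) \<Rightarrow> bool" where
  "multicomplex d X m g \<longleftrightarrow>
     simplicial_complex d X \<and>
     (\<forall>\<tau>\<in>X. 1 \<le> m \<tau>) \<and>
     m {} = 1 \<and> (\<forall>v. {v} \<in> X \<longrightarrow> m {v} = 1) \<and>
     (\<forall>a \<sigma>. is_multicell X m a \<and> codim1_face \<sigma> (fst a) \<longrightarrow>
        is_multicell X m (g a \<sigma>) \<and> fst (g a \<sigma>) = \<sigma>) \<and>
     (\<forall>b b' c. is_multicell X m b \<and> is_multicell X m b' \<and> is_multicell X m c \<and>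
        card (fst b) = card (fst b') \<and>
        contained X m g b c \<and> contained X m g b' c \<and>
        codim1_face (fst b \<inter> fst b') (fst b) \<and> codim1_face (fst b \<inter> fst b') (fst b')
        \<longrightarrow> g b (fst b \<inter> fst b') = g b' (fst b \<inter> fst b'))"

definition pure :: "nat \<Rightarrow> 'v set set \<Rightarrow> ('v set \<Rightarrow> nat)
    \<Rightarrow> ('v mcell \<Rightarrow> 'v set \<Rightarrow> 'v mcell) \<Rightarrow> bool" where
  "pure d X m g \<longleftrightarrow>
     (\<forall>a. is_multicell X m a \<longrightarrow>
        (\<exists>c. is_multicell X m c \<and> card (fst c) = d + 1 \<and> contained X m g a c))"

text \<open>Adjacency in the 1-skeleton of the link of a: two (j+1)-multicells containing a
  are joined by an edge iff some (j+2)-multicell containing a contains both.\<close>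
definition link_vertex :: "'v set set \<Rightarrow> ('v set \<Rightarrow> nat)
    \<Rightarrow> ('v mcell \<Rightarrow> 'v set \<Rightarrow> 'v mcell) \<Rightarrow> 'v mcell \<Rightarrow> 'v mcell \<Rightarrow> bool" where
  "link_vertex X m g a u \<longleftrightarrow>
     is_multicell X m u \<and> card (fst u) = card (fst a) + 1 \<and> contained X m g a u"

definition link_adj :: "'v set set \<Rightarrow> ('v set \<Rightarrow> nat)
    \<Rightarrow> ('v mcell \<Rightarrow> 'v set \<Rightarrow> 'v mcell) \<Rightarrow> 'v mcell \<Rightarrow> 'v mcell \<Rightarrow> 'v mcell \<Rightarrow> bool" where
  "link_adj X m g a u w \<longleftrightarrow>
     link_vertex X m g a u \<and> link_vertex X m g a w \<and>
     (\<exists>e. is_multicell X m e \<and> card (fst e) = card (fst a) + 2 \<and> contained X m g a e \<and>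
          contained X m g u e \<and> contained X m g w e)"

definition link_connected :: "nat \<Rightarrow> 'v set set \<Rightarrow> ('v set \<Rightarrow> nat)
    \<Rightarrow> ('v mcell \<Rightarrow> 'v set \<Rightarrow> 'v mcell) \<Rightarrow> bool" where
  "link_connected d X m g \<longleftrightarrow>
     (\<forall>a. is_multicell X m a \<and> card (fst a) + 1 \<le> d \<longrightarrow>
        (\<forall>u w. link_vertex X m g a u \<and> link_vertex X m g a w \<longrightarrow>
           (link_adj X m g a)\<^sup>*\<^sup>* u w))"

definition lower_adj :: "nat \<Rightarrow> 'v set set \<Rightarrow> ('v set \<Rightarrow> nat)
    \<Rightarrow> ('v mcell \<Rightarrow> 'v set \<Rightarrow> 'v mcell) \<Rightarrow> 'v mcell \<Rightarrow> 'v mcell \<Rightarrow> 'v mcell \<Rightarrow> bool" where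
  "lower_adj d X m g a P Q \<longleftrightarrow>
     is_multicell X m P \<and> card (fst P) = d + 1 \<and> contained X m g a P \<and>
     is_multicell X m Q \<and> card (fst Q) = d + 1 \<and> contained X m g a Q \<and>
     (\<exists>c. is_multicell X m c \<and> card (fst c) = d \<and> contained X m g a c \<and>
          contained X m g c P \<and> contained X m g c Q)"

definition lower_path_connected_links :: "nat \<Rightarrow> 'v set set \<Rightarrow> ('v set \<Rightarrow> nat)
    \<Rightarrow> ('v mcell \<Rightarrow> 'v set \<Rightarrow> 'v mcell) \<Rightarrow> bool" where
  "lower_path_connected_links d X m g \<longleftrightarrow>
     (\<forall>a. is_multicell X m a \<and> card (fst a) + 1 \<le> d \<longrightarrow>
        (\<forall>P Q. is_multicell X m P \<and> card (fst P) = d + 1 \<and> contained X m g a P \<and>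
               is_multicell X m Q \<and> card (fst Q) = d + 1 \<and> contained X m g a Q \<longrightarrow>
           (lower_adj d X m g a)\<^sup>*\<^sup>* P Q))"

end

theory Submission
  imports Defs
begin

text \<open>A lower path of facets above \<open>a\<close> yields a path in the link of \<open>a\<close>, because two
  vertices of the link lying in a common facet span an edge there; conversely, a path in
  the link is lifted edge by edge to facets containing those edges, while inside the
  star of each link vertex the facets are lower-connected by induction on the codimension.
  The combinatorial heart is that a multicell has a unique face on each subset of its
  vertices, which is where the consistency of the gluing map enters.\<close>

lemma codim1_faces_Int:
  assumes "codim1_face A B1" "codim1_face A B2" "finite B1" "B1 \<noteq> B2"
  shows "B1 \<inter> B2 = A"
proof -
  have "card B2 > 0"
    using assms(2) unfolding codim1_face_def by simp
  then have "finite B2"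
    using card_ge_0_finite by blast
  have "\<not> B1 \<subseteq> B2"
  proof
    assume "B1 \<subseteq> B2"
    with \<open>finite B2\<close> have "B1 = B2"
      using assms(1,2) card_seteq unfolding codim1_face_def by (metis order_refl)
    with assms(4) show False ..
  qed
  then have "B1 \<inter> B2 \<subset> B1"
    by blast
  then have "card (B1 \<inter> B2) < card B1"
    by (rule psubset_card_mono[OF assms(3)])
  moreover have "A \<subseteq> B1 \<inter> B2" "finite (B1 \<inter> B2)"
    using assms(1-3) unfolding codim1_face_def by auto
  ultimately show ?thesis
    using assms(1) card_seteq unfolding codim1_face_def by (metis less_Suc_eq_le Suc_eq_plus1)
qed

lemma contained_refl: "contained X m g a a"
  unfolding contained_def by simp

lemma contained_trans: "contained X m g a b \<Longrightarrow> contained X m g b c \<Longrightarrow> contained X m g a c"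
  unfolding contained_def using rtranclp_trans by metis

locale multicomplex_setting =
  fixes d :: nat and X :: "'v set set" and m :: "'v set \<Rightarrow> nat"
    and g :: "'v set \<times> nat \<Rightarrow> 'v set \<Rightarrow> 'v set \<times> nat"
  assumes multicomplex: "multicomplex d X m g"
begin

abbreviation "MC \<equiv> is_multicell X m"
abbreviation "CT \<equiv> contained X m g"

abbreviation facet_over :: "'v mcell \<Rightarrow> 'v mcell \<Rightarrow> bool" where
  "facet_over a P \<equiv> MC P \<and> card (fst P) = d + 1 \<and> CT a P"

lemma simplicial_complex: "simplicial_complex d X"
  using multicomplex unfolding multicomplex_def by (elim conjE)

lemma multicell_finite: "MC a \<Longrightarrow> finite (fst a)"
  using simplicial_complex unfolding simplicial_complex_def is_multicell_def by (elim conjE) blast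

lemma glue_multicell:
  "MC a \<Longrightarrow> codim1_face \<sigma> (fst a) \<Longrightarrow> MC (g a \<sigma>) \<and> fst (g a \<sigma>) = \<sigma>"
  using multicomplex unfolding multicomplex_def by (elim conjE) blast

lemma glue_consistent:
  assumes "MC b" "MC b'" "MC c" "CT b c" "CT b' c"
    "codim1_face (fst b \<inter> fst b') (fst b)" "codim1_face (fst b \<inter> fst b') (fst b')"
  shows "g b (fst b \<inter> fst b') = g b' (fst b \<inter> fst b')"
proof -
  have "card (fst b) = card (fst b')"
    using assms(6,7) unfolding codim1_face_def by simp
  with assms show ?thesis
    using multicomplex unfolding multicomplex_def by (elim conjE) blast
qed

lemma glue_step_iff:
  "glue_step X m g a b \<longleftrightarrow> MC a \<and> codim1_face (fst b) (fst a) \<and> b = g a (fst b)"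
  using glue_multicell unfolding glue_step_def by metis

lemma glue_step_multicell: "glue_step X m g a b \<Longrightarrow> MC b"
  using glue_multicell unfolding glue_step_def by blast

lemma contained_face:
  assumes "CT b a" "MC a"
  shows "MC b \<and> fst b \<subseteq> fst a \<and> (b = a \<or> card (fst b) < card (fst a))"
  using assms(1) unfolding contained_def
proof (induction rule: rtranclp_induct)
  case base
  show ?case using assms(2) by simp
next
  case (step y z)
  have "MC z" "codim1_face (fst z) (fst y)"
    using glue_step_multicell[OF step.hyps(2)] step.hyps(2) unfolding glue_step_iff by auto
  with step.IH show ?case
    unfolding codim1_face_def by auto
qed

lemma exists_cofacet_between:
  assumes "CT a P" "card (fst a) < card (fst P)"
  obtains u where "MC u" "card (fst u) = card (fst a) + 1" "CT a u" "CT u P"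
proof -
  have "(glue_step X m g)\<^sup>*\<^sup>* P a" "P \<noteq> a"
    using assms unfolding contained_def by auto
  then obtain u where u: "(glue_step X m g)\<^sup>*\<^sup>* P u" "glue_step X m g u a"
    by (blast elim: rtranclp.cases)
  then have "MC u" "card (fst u) = card (fst a) + 1"
    unfolding glue_step_iff codim1_face_def by auto
  moreover have "CT a u" "CT u P"
    using u unfolding contained_def by auto
  ultimately show ?thesis
    using that by blast
qed

lemma exists_contained_face:
  assumes "MC c" "\<sigma> \<subseteq> fst c"
  obtains b where "CT b c" "fst b = \<sigma>"
  using assms
proof (induction "card (fst c) - card \<sigma>" arbitrary: c)
  case 0
  then have "\<sigma> = fst c"
    using card_seteq multicell_finite by (metis diff_is_0_eq)
  then show ?case using 0 contained_refl by blast
next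
  case (Suc n)
  then have "\<sigma> \<noteq> fst c" by auto
  then obtain x where x: "x \<in> fst c" "x \<notin> \<sigma>" using Suc.prems(3) by blast
  define c' where "c' = g c (fst c - {x})"
  have "finite (fst c)"
    using multicell_finite Suc.prems(2) by blast
  moreover have "card (fst c) > 0"
    using calculation x(1) card_gt_0_iff by blast
  ultimately have face: "codim1_face (fst c - {x}) (fst c)"
    using x unfolding codim1_face_def by simp
  then have c': "MC c'" "fst c' = fst c - {x}" "CT c' c"
    using glue_multicell Suc.prems(2) unfolding c'_def contained_def glue_step_def by auto
  have "n = card (fst c') - card \<sigma>"
    using Suc.hyps(2) face c'(2) unfolding codim1_face_def by simp
  moreover have "\<sigma> \<subseteq> fst c'"
    using Suc.prems(3) x c'(2) by auto
  ultimately show ?case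
    using Suc.hyps(1) Suc.prems(1) c'(1,3) contained_trans by metis
qed

text \<open>A multicell has at most one face on a given vertex set. Going one gluing step up
  from two such faces, the induction hypothesis identifies the parents if they have the
  same support, and otherwise the parents meet exactly in that vertex set, so the
  consistency condition forces both gluings to agree.\<close>
lemma contained_face_unique:
  assumes "MC c" "CT b c" "CT b' c" "fst b = fst b'"
  shows "b = b'"
  using assms(2-4) unfolding contained_def
proof (induction arbitrary: b' rule: rtranclp_induct)
  case base
  have "CT b' c" using base.prems(1) unfolding contained_def .
  then show ?case
    using contained_face[OF _ assms(1)] base.prems(2) by (metis less_irrefl)
next
  case (step b1 b)
  have b: "MC b1" "codim1_face (fst b) (fst b1)" "b = g b1 (fst b)"
    using step.hyps(2) unfolding glue_step_iff by auto
  have "fst b1 \<subseteq> fst c"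
    using contained_face[OF _ assms(1)] step.hyps(1) unfolding contained_def by blast
  then have "b' \<noteq> c"
    using b(2) step.prems(2) unfolding codim1_face_def by auto
  with step.prems(1) obtain b1' where b1': "(glue_step X m g)\<^sup>*\<^sup>* c b1'" "glue_step X m g b1' b'"
    by (blast elim: rtranclp.cases)
  have b': "MC b1'" "codim1_face (fst b) (fst b1')" "b' = g b1' (fst b)"
    using b1'(2) step.prems(2) unfolding glue_step_iff by auto
  show ?case
  proof (cases "fst b1 = fst b1'")
    case True
    then show ?thesis using step.IH b1'(1) b(3) b'(3) by metis
  next
    case False
    then have "fst b1 \<inter> fst b1' = fst b"
      using codim1_faces_Int b(2) b'(2) multicell_finite[OF b(1)] by blast
    then show ?thesis
      using glue_consistent[OF b(1) b'(1) assms(1)] step.hyps(1) b1'(1) b b'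
      unfolding contained_def by metis
  qed
qed

lemma contained_if_subset:
  assumes "MC P" "CT u P" "CT e P" "fst u \<subseteq> fst e"
  shows "CT u e"
proof -
  have "MC e" using contained_face[OF assms(3,1)] by blast
  then obtain u' where "CT u' e" "fst u' = fst u"
    using exists_contained_face assms(4) by metis
  moreover have "u' = u"
    using contained_face_unique[OF assms(1)] assms(2,3) calculation contained_trans by metis
  ultimately show ?thesis by simp
qed

lemma link_adj_if_common_contained:
  assumes "MC P" "link_vertex X m g a u" "CT u P" "link_vertex X m g a w" "CT w P"
  shows "(link_adj X m g a)\<^sup>*\<^sup>* u w"
proof (cases "fst u = fst w")
  case True
  then show ?thesis using contained_face_unique[OF assms(1,3,5)] by simp
next
  case False
  have u: "MC u" "card (fst u) = card (fst a) + 1" "CT a u"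
    and w: "MC w" "card (fst w) = card (fst a) + 1" "CT a w"
    using assms(2,4) unfolding link_vertex_def by auto
  have "codim1_face (fst a) (fst u)" "codim1_face (fst a) (fst w)"
    using contained_face[OF u(3,1)] contained_face[OF w(3,1)] u(2) w(2)
    unfolding codim1_face_def by auto
  then have "fst u \<inter> fst w = fst a"
    using codim1_faces_Int False multicell_finite[OF u(1)] by blast
  then have card_e: "card (fst u \<union> fst w) = card (fst a) + 2"
    using card_Un_Int[OF multicell_finite[OF u(1)] multicell_finite[OF w(1)]] u(2) w(2) by simp
  have "fst u \<union> fst w \<subseteq> fst P"
    using contained_face[OF assms(3,1)] contained_face[OF assms(5,1)] by blast
  then obtain e where e: "CT e P" "fst e = fst u \<union> fst w"
    using exists_contained_face assms(1) by metis
  have "CT u e" "CT w e"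
    using contained_if_subset[OF assms(1,3) e(1)] contained_if_subset[OF assms(1,5) e(1)] e(2)
    by auto
  moreover have "MC e"
    using contained_face[OF e(1) assms(1)] by blast
  moreover have "CT a e"
    using u(3) \<open>CT u e\<close> by (rule contained_trans)
  moreover have "card (fst e) = card (fst a) + 2"
    using e(2) card_e by simp
  ultimately have "link_adj X m g a u w"
    using assms(2,4) unfolding link_adj_def by blast
  then show ?thesis by blast
qed

lemma lower_path_mono:
  assumes "CT a u" "(lower_adj d X m g u)\<^sup>*\<^sup>* P Q"
  shows "(lower_adj d X m g a)\<^sup>*\<^sup>* P Q"
proof -
  have "lower_adj d X m g a R S" if "lower_adj d X m g u R S" for R S
    using that assms(1) contained_trans unfolding lower_adj_def by metis
  then show ?thesis
    using assms(2) mono_rtranclp by metis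
qed

lemma link_path_along_lower_path:
  assumes "(lower_adj d X m g a)\<^sup>*\<^sup>* P Q" "card (fst a) + 1 \<le> d" "MC P"
    "link_vertex X m g a u" "CT u P" "link_vertex X m g a w" "CT w Q"
  shows "(link_adj X m g a)\<^sup>*\<^sup>* u w"
  using assms(1,6,7)
proof (induction arbitrary: w rule: rtranclp_induct)
  case base
  then show ?case using link_adj_if_common_contained assms(3-5) by blast
next
  case (step Q' Q)
  obtain c where c: "MC c" "card (fst c) = d" "CT a c" "CT c Q'" "CT c Q" and "MC Q"
    using step.hyps(2) unfolding lower_adj_def by blast
  obtain v where v: "MC v" "card (fst v) = card (fst a) + 1" "CT a v" "CT v c"
    using exists_cofacet_between[OF c(3)] c(2) assms(2) by auto
  then have "link_vertex X m g a v"
    unfolding link_vertex_def by simp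
  moreover have "CT v Q'" "CT v Q"
    using v(4) c(4,5) contained_trans by blast+
  ultimately have "(link_adj X m g a)\<^sup>*\<^sup>* u v" "(link_adj X m g a)\<^sup>*\<^sup>* v w"
    using step.IH link_adj_if_common_contained[OF \<open>MC Q\<close>] step.prems by blast+
  then show ?case by simp
qed

end

locale pure_multicomplex_setting = multicomplex_setting +
  assumes pure: "pure d X m g"
begin

lemma exists_facet_over: "MC a \<Longrightarrow> \<exists>P. facet_over a P"
  using pure unfolding pure_def by blast

lemma lower_path_connected_imp_link_connected:
  assumes "lower_path_connected_links d X m g"
  shows "link_connected d X m g"
  unfolding link_connected_def
proof (intro allI impI, elim conjE)
  fix a u w
  assume a: "MC a" "card (fst a) + 1 \<le> d"
    and u: "link_vertex X m g a u" and w: "link_vertex X m g a w"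
  obtain P Q where "facet_over u P" "facet_over w Q"
    using exists_facet_over u w unfolding link_vertex_def by meson
  moreover have "CT a P" "CT a Q"
    using calculation u w contained_trans unfolding link_vertex_def by blast+
  ultimately have "(lower_adj d X m g a)\<^sup>*\<^sup>* P Q"
    using assms a unfolding lower_path_connected_links_def by blast
  then show "(link_adj X m g a)\<^sup>*\<^sup>* u w"
    using link_path_along_lower_path a(2) u w \<open>facet_over u P\<close> \<open>facet_over w Q\<close> by blast
qed

lemma lower_path_along_link_path:
  assumes star: "\<And>v R S. link_vertex X m g a v \<Longrightarrow> facet_over v R \<Longrightarrow> facet_over v S
      \<Longrightarrow> (lower_adj d X m g a)\<^sup>*\<^sup>* R S"
    and "(link_adj X m g a)\<^sup>*\<^sup>* u w" "link_vertex X m g a u" "facet_over u P" "facet_over w Q"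
  shows "(lower_adj d X m g a)\<^sup>*\<^sup>* P Q"
  using assms(2,5)
proof (induction arbitrary: Q rule: rtranclp_induct)
  case base
  then show ?case using star assms(3,4) by blast
next
  case (step v w')
  obtain e where e: "MC e" "CT v e" "CT w' e" and "link_vertex X m g a w'"
    using step.hyps(2) unfolding link_adj_def by blast
  obtain R where "facet_over e R"
    using exists_facet_over e(1) by blast
  then have "(lower_adj d X m g a)\<^sup>*\<^sup>* P R" "(lower_adj d X m g a)\<^sup>*\<^sup>* R Q"
    using step.IH star[OF \<open>link_vertex X m g a w'\<close>] step.prems e(2,3) contained_trans by blast+
  then show ?case by simp
qed

lemma link_connected_imp_facets_lower_connected:
  assumes "link_connected d X m g" "MC a" "card (fst a) \<le> d" "facet_over a P" "facet_over a Q"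
  shows "(lower_adj d X m g a)\<^sup>*\<^sup>* P Q"
  using assms(2-5)
proof (induction "d - card (fst a)" arbitrary: a P Q)
  case 0
  then have "card (fst a) = d"
    by simp
  with 0 have "lower_adj d X m g a P Q"
    using contained_refl unfolding lower_adj_def by blast
  then show ?case by blast
next
  case (Suc k)
  then have a_low: "card (fst a) < d"
    by simp
  have star: "(lower_adj d X m g a)\<^sup>*\<^sup>* R S"
    if "link_vertex X m g a v" "facet_over v R" "facet_over v S" for v R S
  proof -
    have v: "MC v" "card (fst v) = card (fst a) + 1" "CT a v"
      using that(1) unfolding link_vertex_def by auto
    then have "k = d - card (fst v)" "card (fst v) \<le> d"
      using Suc.hyps(2) a_low by simp_all
    then have "(lower_adj d X m g v)\<^sup>*\<^sup>* R S"
      using Suc.hyps(1) v(1) that(2,3) by blast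
    then show ?thesis
      using lower_path_mono v(3) by blast
  qed
  have "card (fst a) < card (fst P)" "card (fst a) < card (fst Q)"
    using Suc.prems(3,4) a_low by simp_all
  then obtain u w where u: "MC u" "card (fst u) = card (fst a) + 1" "CT a u" "CT u P"
    and w: "MC w" "card (fst w) = card (fst a) + 1" "CT a w" "CT w Q"
    using exists_cofacet_between Suc.prems(3,4) by metis
  have "link_vertex X m g a u" "link_vertex X m g a w"
    using u w unfolding link_vertex_def by auto
  moreover have "card (fst a) + 1 \<le> d"
    using a_low by simp
  ultimately have "(link_adj X m g a)\<^sup>*\<^sup>* u w"
    using assms(1) Suc.prems(1) unfolding link_connected_def by blast
  then show ?case
    using lower_path_along_link_path star \<open>link_vertex X m g a u\<close> Suc.prems(3,4) u(4) w(4)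
    by blast
qed

lemma link_connected_imp_lower_path_connected:
  "link_connected d X m g \<Longrightarrow> lower_path_connected_links d X m g"
  unfolding lower_path_connected_links_def
  using link_connected_imp_facets_lower_connected by auto

end

theorem proposition3:
  fixes d :: nat and X :: "'v set set" and m :: "'v set \<Rightarrow> nat"
    and g :: "'v set \<times> nat \<Rightarrow> 'v set \<Rightarrow> 'v set \<times> nat"
  assumes "multicomplex d X m g" and "pure d X m g"
  shows "link_connected d X m g \<longleftrightarrow> lower_path_connected_links d X m g"
proof -
  interpret pure_multicomplex_setting d X m g
    using assms by unfold_locales
  show ?thesis
    using link_connected_imp_lower_path_connected lower_path_connected_imp_link_connected by blast
qed

end
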